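(* Let $(X,d,f)$ be a dynamical system with $f$ uniformly continuous, and let $\mathcal{A}=\{\mathcal{U}_n\}_{n\in\mathbb{N}}$ be a complete tame defining sequence of $(X,d)$. Then $f$ has the shadowing property if and only if $(X,d,f)$ is uniformly conjugate to an inverse limit dynamical system whose associated inverse system consists of a sequence of 1-step shifts on countable alphabets, with uniformly continuous bonding maps, and satisfies the Mittag-Leffler Condition.
   Context: All spaces are nonempty separable metrizable. A dynamical system $(X,d,f)$: admissible metric $d$, continuous $f:X\to X$. A partition of $X$ is a cover by pairwise disjoint nonempty clopen sets. A defining sequence is a sequence $\{\mathcal{U}_n\}$ of partitions, each refining the previous, whose union is a basis of the topology; complete if every nested sequence $U_n\in\mathcal{U}_n$, $U_{n+1}\subseteq U_n$, has nonempty intersection; tame (w.r.t. $d$) if $\sup\{\operatorname{diam}O:O\in\mathcal{U}_n\}\to0$ and each $\mathcal{U}_n$ is $\rho_n$-separated for some $\rho_n>0$ (points in distinct elements are at distance $\ge\rho_n$). Shadowing property: for every $\varepsilon>0$ there is $\delta>0$ such that every infinite sequence $(x_n)$ with $d(f(x_n),x_{n+1})<\delta$ for all $n$ admits $x$ with $d(f^n(x),x_n)<\varepsilon$ for all $n$. A 1-step shift on a countable alphabet $A$ is a closed shift-invariant subset $Y\subseteq A^{\mathbb{N}}$ of the form $Y=\{y: y \text{ contains no word of } F\}$ for a set $F$ of words of length 2, with the shift map $\sigma$ and metric $d(y,z)=1/(i+1)$, $i$ least index with $y_i\ne z_i$. Given dynamical systems $(X_m,d_m,f_m)$ with metrics bounded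 by 1 and continuous bonding maps $g_m:X_{m+1}\to X_m$ with $f_m\circ g_m=g_m\circ f_{m+1}$, the inverse limit dynamical system is $\varprojlim(g_m,X_m)=\{(x_m)\in\prod X_m: x_m=g_m(x_{m+1})\}$ with metric $d_\Pi((x_m),(y_m))=\max_m d_m(x_m,y_m)/(m+1)$ and map the restriction of $\prod_m f_m$. The inverse system satisfies the Mittag-Leffler Condition if for every $N$ there is $k>N$ with $g_N\circ\cdots\circ g_k(X_{k+1})=g_N\circ\cdots\circ g_i(X_{i+1})$ for all $i\ge k$. Dynamical systems $(X,d_1,f)$, $(Y,d_2,g)$ are uniformly conjugate if there is a surjective homeomorphism $h:X\to Y$ with $h,h^{-1}$ uniformly continuous and $h\circ f=g\circ h$. *)

theory Defs
  imports "HOL-Analysis.Analysis"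
begin

definition ucont :: "'a set \<Rightarrow> ('a \<Rightarrow> 'a \<Rightarrow> real) \<Rightarrow> ('b \<Rightarrow> 'b \<Rightarrow> real) \<Rightarrow> ('a \<Rightarrow> 'b) \<Rightarrow> bool" where
  "ucont A dA dB h \<longleftrightarrow>
     (\<forall>e>0. \<exists>\<delta>>0. \<forall>x\<in>A. \<forall>y\<in>A. dA x y < \<delta> \<longrightarrow> dB (h x) (h y) < e)"

definition dyn_sys :: "'a set \<Rightarrow> ('a \<Rightarrow> 'a \<Rightarrow> real) \<Rightarrow> ('a \<Rightarrow> 'a) \<Rightarrow> bool" where
  "dyn_sys X d f \<longleftrightarrow> Metric_space X d \<and> X \<noteq> {} \<and>
     separable_space (Metric_space.mtopology X d) \<and>
     continuous_map (Metric_space.mtopology X d) (Metric_space.mtopology X d) f"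

definition clopen_in :: "'a set \<Rightarrow> ('a \<Rightarrow> 'a \<Rightarrow> real) \<Rightarrow> 'a set \<Rightarrow> bool" where
  "clopen_in X d U \<longleftrightarrow> openin (Metric_space.mtopology X d) U \<and> closedin (Metric_space.mtopology X d) U"

definition is_partition :: "'a set \<Rightarrow> ('a \<Rightarrow> 'a \<Rightarrow> real) \<Rightarrow> 'a set set \<Rightarrow> bool" where
  "is_partition X d P \<longleftrightarrow> (\<forall>U\<in>P. U \<noteq> {} \<and> clopen_in X d U) \<and> \<Union>P = X \<and> pairwise disjnt P"

definition defining_sequence :: "'a set \<Rightarrow> ('a \<Rightarrow> 'a \<Rightarrow> real) \<Rightarrow> (nat \<Rightarrow> 'a set set) \<Rightarrow> bool" where
  "defining_sequence X d \<U> \<longleftrightarrow>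
     (\<forall>n. is_partition X d (\<U> n)) \<and>
     (\<forall>n. \<forall>V\<in>\<U> (Suc n). \<exists>W\<in>\<U> n. V \<subseteq> W) \<and>
     (\<forall>G x. openin (Metric_space.mtopology X d) G \<and> x \<in> G \<longrightarrow>
        (\<exists>V\<in>(\<Union>n. \<U> n). x \<in> V \<and> V \<subseteq> G))"

definition complete_defseq :: "(nat \<Rightarrow> 'a set set) \<Rightarrow> bool" where
  "complete_defseq \<U> \<longleftrightarrow>
     (\<forall>V. (\<forall>n. V n \<in> \<U> n \<and> V (Suc n) \<subseteq> V n) \<longrightarrow> \<Inter>(range V) \<noteq> {})"

definition tame_defseq :: "('a \<Rightarrow> 'a \<Rightarrow> real) \<Rightarrow> (nat \<Rightarrow> 'a set set) \<Rightarrow> bool" where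
  "tame_defseq d \<U> \<longleftrightarrow>
     (\<forall>e>0. \<exists>N. \<forall>n\<ge>N. \<forall>B\<in>\<U> n. \<forall>x\<in>B. \<forall>y\<in>B. d x y < e) \<and>
     (\<forall>n. \<exists>\<rho>>0. \<forall>B\<in>\<U> n. \<forall>BB\<in>\<U> n. B \<noteq> BB \<longrightarrow> (\<forall>x\<in>B. \<forall>y\<in>BB. \<rho> \<le> d x y))"

definition shadowing :: "'a set \<Rightarrow> ('a \<Rightarrow> 'a \<Rightarrow> real) \<Rightarrow> ('a \<Rightarrow> 'a) \<Rightarrow> bool" where
  "shadowing X d f \<longleftrightarrow>
     (\<forall>e>0. \<exists>\<delta>>0. \<forall>xs. (\<forall>n. xs n \<in> X) \<and> (\<forall>n. d (f (xs n)) (xs (Suc n)) < \<delta>) \<longrightarrow>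
        (\<exists>x\<in>X. \<forall>n. d ((f ^^ n) x) (xs n) < e))"

text \<open>Shift spaces over countable alphabets, represented as subsets of nat.\<close>
definition shift_dist :: "(nat \<Rightarrow> nat) \<Rightarrow> (nat \<Rightarrow> nat) \<Rightarrow> real" where
  "shift_dist y z = (if y = z then 0 else 1 / real (Suc (LEAST i. y i \<noteq> z i)))"

definition shift_map :: "(nat \<Rightarrow> nat) \<Rightarrow> (nat \<Rightarrow> nat)" where
  "shift_map y = (\<lambda>i. y (Suc i))"

definition one_step_shift :: "nat set \<Rightarrow> (nat \<times> nat) set \<Rightarrow> (nat \<Rightarrow> nat) set" where
  "one_step_shift A F = {y. (\<forall>i. y i \<in> A) \<and> (\<forall>i. (y i, y (Suc i)) \<notin> F)}"

text \<open>gcomp g N j = g N \<circ> g (N+1) \<circ> ... \<circ> g (N+j), mapping level N+j+1 to level N.\<close>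
fun gcomp :: "(nat \<Rightarrow> 'b \<Rightarrow> 'b) \<Rightarrow> nat \<Rightarrow> nat \<Rightarrow> 'b \<Rightarrow> 'b" where
  "gcomp g N 0 = g N"
| "gcomp g N (Suc j) = gcomp g N j \<circ> g (N + Suc j)"

definition mittag_leffler :: "(nat \<Rightarrow> 'b set) \<Rightarrow> (nat \<Rightarrow> 'b \<Rightarrow> 'b) \<Rightarrow> bool" where
  "mittag_leffler Y g \<longleftrightarrow>
     (\<forall>N. \<exists>k>N. \<forall>i\<ge>k. gcomp g N (k - N) ` Y (Suc k) = gcomp g N (i - N) ` Y (Suc i))"

definition inv_lim :: "(nat \<Rightarrow> 'b set) \<Rightarrow> (nat \<Rightarrow> 'b \<Rightarrow> 'b) \<Rightarrow> (nat \<Rightarrow> 'b) set" where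
  "inv_lim Y g = {x. (\<forall>m. x m \<in> Y m) \<and> (\<forall>m. x m = g m (x (Suc m)))}"

definition inv_lim_dist :: "(nat \<Rightarrow> 'b \<Rightarrow> 'b \<Rightarrow> real) \<Rightarrow> (nat \<Rightarrow> 'b) \<Rightarrow> (nat \<Rightarrow> 'b) \<Rightarrow> real" where
  "inv_lim_dist dm x y = (SUP m. dm m (x m) (y m) / real (Suc m))"

definition inv_lim_map :: "(nat \<Rightarrow> 'b \<Rightarrow> 'b) \<Rightarrow> (nat \<Rightarrow> 'b) \<Rightarrow> (nat \<Rightarrow> 'b)" where
  "inv_lim_map fm x = (\<lambda>m. fm m (x m))"

definition unif_conj :: "'a set \<Rightarrow> ('a \<Rightarrow> 'a \<Rightarrow> real) \<Rightarrow> ('a \<Rightarrow> 'a) \<Rightarrow>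
    'c set \<Rightarrow> ('c \<Rightarrow> 'c \<Rightarrow> real) \<Rightarrow> ('c \<Rightarrow> 'c) \<Rightarrow> bool" where
  "unif_conj X d1 f Y d2 g \<longleftrightarrow>
     (\<exists>h. bij_betw h X Y \<and> ucont X d1 d2 h \<and> ucont Y d2 d1 (inv_into X h) \<and>
          (\<forall>x\<in>X. h (f x) = g (h x)))"

end

theory Submission
  imports Defs
begin

text \<open>
  Shadowing passes to uniformly conjugate systems, so for one direction it suffices that an
  inverse limit of 1-step shifts with the Mittag-Leffler condition has shadowing. A pseudo-orbit
  is read at a deep level, where it is a sequence of shift points overlapping in long words; since
  a 1-step shift is defined by words of length 2, the sequence of first symbols is a genuine point
  shadowing it. Mapped down into the stable image of a lower level, this point lifts to the whole
  inverse limit, and closeness at one level controls all lower levels by uniform continuity of the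
  bonding maps.

  Conversely, a complete tame defining sequence codes a point at scale \<open>M\<close> by the cell containing
  it at a level where cells have diameter \<open>< 1 / (M + 1)\<close>. The coded orbits at scale \<open>M\<close> generate
  a 1-step shift, and the coding of orbits is a uniform conjugacy onto the inverse limit of these
  shifts: completeness gives surjectivity, small diameters and positive separation of the cells
  give uniform continuity in both directions. A point of the shift at scale \<open>M\<close> codes a
  \<open>1 / (M + 1)\<close>-pseudo-orbit, so shadowing forces the images at scale \<open>N\<close> of all sufficiently
  deep shifts to be exactly the coded genuine orbits, which is the Mittag-Leffler condition.
\<close>

section \<open>The shift metric and 1-step shifts\<close>

lemma shift_dist_nonneg: "0 \<le> shift_dist y z"
  by (simp add: shift_dist_def)

lemma shift_dist_le_1: "shift_dist y z \<le> 1"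
  by (simp add: shift_dist_def)

lemma shift_dist_less_iff: "shift_dist y z < 1 / real (Suc M) \<longleftrightarrow> (\<forall>i\<le>M. y i = z i)"
proof (cases "y = z")
  case False
  define L where "L = (LEAST i. y i \<noteq> z i)"
  have "y L \<noteq> z L"
    using False LeastI_ex[of "\<lambda>i. y i \<noteq> z i"] unfolding L_def by blast
  moreover have "\<And>i. i < L \<Longrightarrow> y i = z i"
    using not_less_Least[of _ "\<lambda>i. y i \<noteq> z i"] unfolding L_def by blast
  ultimately have "(\<forall>i\<le>M. y i = z i) \<longleftrightarrow> M < L"
    by (meson leI le_less_trans order_refl)
  moreover have "shift_dist y z = 1 / real (Suc L)"
    using False by (simp add: shift_dist_def L_def)
  moreover have "1 / real (Suc L) < 1 / real (Suc M) \<longleftrightarrow> M < L"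
    by (simp add: field_simps)
  ultimately show ?thesis
    by simp
qed (simp add: shift_dist_def)

lemma shift_map_in_one_step_shift: "y \<in> one_step_shift A F \<Longrightarrow> shift_map y \<in> one_step_shift A F"
  by (simp add: one_step_shift_def shift_map_def)

lemma funpow_shift_map: "(shift_map ^^ n) y = (\<lambda>i. y (n + i))"
  by (induction n arbitrary: y) (auto simp: shift_map_def funpow_Suc_right)

lemma funpow_shift_map_in_one_step_shift:
  "y \<in> one_step_shift A F \<Longrightarrow> (shift_map ^^ n) y \<in> one_step_shift A F"
  by (induction n) (auto simp: shift_map_in_one_step_shift)

text \<open>Consecutive points of the pseudo-orbit overlap in \<open>R + 1\<close> symbols, and membership in a
  1-step shift only involves words of length 2.\<close>
lemma one_step_shift_pseudo_orbit_shadowed: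
  assumes in_shift: "\<And>n. q n \<in> one_step_shift A F"
    and pseudo: "\<And>n. shift_dist (shift_map (q n)) (q (Suc n)) < 1 / real (Suc R)"
  defines "z \<equiv> \<lambda>n. q n 0"
  shows "z \<in> one_step_shift A F"
    and "\<And>n. shift_dist ((shift_map ^^ n) z) (q n) < 1 / real (Suc R)"
proof -
  have agree: "q n (Suc i) = q (Suc n) i" if "i \<le> R" for n i
    using pseudo[of n] that unfolding shift_dist_less_iff by (simp add: shift_map_def)
  have chain: "q (n + j) i = q n (i + j)" if "i + j \<le> Suc R" for i j n
    using that
  proof (induction j arbitrary: i)
    case (Suc j)
    then show ?case using agree[of i "n + j"] by simp
  qed simp
  show "z \<in> one_step_shift A F"
    unfolding one_step_shift_def
  proof (intro CollectI conjI allI)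
    fix n
    show "z n \<in> A" using in_shift[of n] by (simp add: one_step_shift_def z_def)
    have "(q n 0, q n (Suc 0)) \<notin> F" using in_shift[of n] by (simp add: one_step_shift_def)
    then show "(z n, z (Suc n)) \<notin> F" using agree[of 0 n] by (simp add: z_def)
  qed
  show "shift_dist ((shift_map ^^ n) z) (q n) < 1 / real (Suc R)" for n
    unfolding shift_dist_less_iff funpow_shift_map z_def using chain[of 0] by simp
qed

lemma inv_lim_dist_component_le:
  "shift_dist (x m) (y m) / real (Suc m) \<le> inv_lim_dist (\<lambda>m. shift_dist) x y"
  unfolding inv_lim_dist_def
proof (rule cSUP_upper)
  have bound: "shift_dist (x k) (y k) / real (Suc k) \<le> 1" for k
    using shift_dist_nonneg[of "x k" "y k"] shift_dist_le_1[of "x k" "y k"]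
    by (simp add: divide_le_eq)
  show "bdd_above (range (\<lambda>m. shift_dist (x m) (y m) / real (Suc m)))"
    by (rule bdd_aboveI2[of _ _ 1]) (rule bound)
qed simp

lemma inv_lim_dist_le:
  "(\<And>m. shift_dist (x m) (y m) / real (Suc m) \<le> c) \<Longrightarrow> inv_lim_dist (\<lambda>m. shift_dist) x y \<le> c"
  unfolding inv_lim_dist_def by (rule cSUP_least) auto

lemma shift_dist_less_if_inv_lim_dist_less:
  assumes "inv_lim_dist (\<lambda>m. shift_dist) x y < c / real (Suc m)"
  shows "shift_dist (x m) (y m) < c"
proof -
  have "shift_dist (x m) (y m) / real (Suc m) < c / real (Suc m)"
    using inv_lim_dist_component_le[of x m y] assms by linarith
  then show ?thesis
    by (simp only: divide_less_cancel)
qed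

text \<open>Coordinates beyond \<open>N\<close> are damped by the weight \<open>1 / (m + 1)\<close>.\<close>
lemma inv_lim_dist_le_if_agree:
  assumes "\<And>m i. m \<le> N \<Longrightarrow> i \<le> N \<Longrightarrow> x m i = y m i"
  shows "inv_lim_dist (\<lambda>m. shift_dist) x y \<le> 1 / real (Suc N)"
proof (rule inv_lim_dist_le)
  fix m
  show "shift_dist (x m) (y m) / real (Suc m) \<le> 1 / real (Suc N)"
  proof (cases "m \<le> N")
    case True
    have "shift_dist (x m) (y m) / real (Suc m) \<le> shift_dist (x m) (y m)"
      using shift_dist_nonneg[of "x m" "y m"] by (simp add: divide_le_eq mult_le_cancel_left1)
    also have "\<dots> < 1 / real (Suc N)"
      unfolding shift_dist_less_iff using assms True by simp
    finally show ?thesis by simp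
  next
    case False
    have "shift_dist (x m) (y m) / real (Suc m) \<le> 1 / real (Suc m)"
      using shift_dist_le_1 by (simp add: divide_right_mono)
    also have "\<dots> \<le> 1 / real (Suc N)"
      using False by (simp add: frac_le)
    finally show ?thesis .
  qed
qed

section \<open>Uniform continuity and uniform conjugacy\<close>

lemma ucont_compose:
  assumes "ucont A d1 d2 g" "ucont B d0 d1 h" "h ` B \<subseteq> A"
  shows "ucont B d0 d2 (g \<circ> h)"
  unfolding ucont_def
proof (intro allI impI)
  fix e :: real assume "e > 0"
  then obtain e1 where "e1 > 0" and g: "\<forall>x\<in>A. \<forall>y\<in>A. d1 x y < e1 \<longrightarrow> d2 (g x) (g y) < e"
    using assms(1) unfolding ucont_def by blast
  then obtain e2 where "e2 > 0" and h: "\<forall>x\<in>B. \<forall>y\<in>B. d0 x y < e2 \<longrightarrow> d1 (h x) (h y) < e1"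
    using assms(2) unfolding ucont_def by blast
  then show "\<exists>\<delta>>0. \<forall>x\<in>B. \<forall>y\<in>B. d0 x y < \<delta> \<longrightarrow> d2 ((g \<circ> h) x) ((g \<circ> h) y) < e"
    using g assms(3) by (intro exI[of _ e2]) (auto simp: image_subset_iff)
qed

lemma funpow_in_invariant_set: "f ` X \<subseteq> X \<Longrightarrow> x \<in> X \<Longrightarrow> (f ^^ n) x \<in> X"
  by (induction n) auto

lemma ucont_iterates_equicontinuous:
  assumes f: "ucont X d d f" "f ` X \<subseteq> X" and "r > 0"
  shows "\<exists>\<delta>>0. \<forall>x\<in>X. \<forall>y\<in>X. d x y < \<delta> \<longrightarrow> (\<forall>t\<le>T. d ((f ^^ t) x) ((f ^^ t) y) < r)"
  using \<open>r > 0\<close>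
proof (induction T arbitrary: r)
  case 0
  then show ?case by auto
next
  case (Suc T)
  obtain \<delta>1 where "\<delta>1 > 0" and \<delta>1: "\<forall>x\<in>X. \<forall>y\<in>X. d x y < \<delta>1 \<longrightarrow> d (f x) (f y) < r"
    using f(1) Suc.prems unfolding ucont_def by blast
  with Suc obtain \<delta> where "\<delta> > 0"
    and \<delta>: "\<forall>x\<in>X. \<forall>y\<in>X. d x y < \<delta> \<longrightarrow> (\<forall>t\<le>T. d ((f ^^ t) x) ((f ^^ t) y) < min r \<delta>1)"
    by (metis min_less_iff_conj)
  have "d ((f ^^ t) x) ((f ^^ t) y) < r"
    if "x \<in> X" "y \<in> X" "d x y < \<delta>" "t \<le> Suc T" for x y t
  proof (cases "t \<le> T")
    case False
    then have "t = Suc T" using that(4) by simp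
    moreover have "d ((f ^^ T) x) ((f ^^ T) y) < \<delta>1" using \<delta> that by fastforce
    ultimately show ?thesis
      using \<delta>1 funpow_in_invariant_set[OF f(2)] that by simp
  qed (use \<delta> that in fastforce)
  with \<open>\<delta> > 0\<close> show ?case by blast
qed

lemma funpow_conj:
  "(\<And>x. x \<in> X \<Longrightarrow> h (f x) = s (h x)) \<Longrightarrow> f ` X \<subseteq> X \<Longrightarrow> x \<in> X \<Longrightarrow> h ((f ^^ n) x) = (s ^^ n) (h x)"
  by (induction n) (simp_all add: funpow_in_invariant_set)

lemma unif_conjE:
  assumes "unif_conj X d f Y d' s"
  obtains h k where "ucont X d d' h" "ucont Y d' d k" "\<And>x. x \<in> X \<Longrightarrow> h (f x) = s (h x)"
    "\<And>x. x \<in> X \<Longrightarrow> h x \<in> Y" "\<And>x. x \<in> X \<Longrightarrow> k (h x) = x"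
    "\<And>y. y \<in> Y \<Longrightarrow> k y \<in> X" "\<And>y. y \<in> Y \<Longrightarrow> h (k y) = y"
proof -
  obtain h where bij: "bij_betw h X Y" and "ucont X d d' h" "ucont Y d' d (inv_into X h)"
    "\<And>x. x \<in> X \<Longrightarrow> h (f x) = s (h x)"
    using assms unfolding unif_conj_def by blast
  then show ?thesis
    using bij unfolding bij_betw_def
    by (intro that[of h "inv_into X h"]) (auto simp: inv_into_f_f intro: inv_into_into f_inv_into_f)
qed

lemma shadowing_if_uniformly_conjugate:
  assumes conj: "unif_conj X d f Y d' s" and fX: "f ` X \<subseteq> X"
    and sh: "shadowing Y d' s"
  shows "shadowing X d f"
  unfolding shadowing_def
proof (intro allI impI)
  fix e :: real assume "e > 0"
  obtain h k where uh: "ucont X d d' h" and uk: "ucont Y d' d k"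
    and hf: "\<And>x. x \<in> X \<Longrightarrow> h (f x) = s (h x)"
    and hY: "\<And>x. x \<in> X \<Longrightarrow> h x \<in> Y" and kh: "\<And>x. x \<in> X \<Longrightarrow> k (h x) = x"
    and kY: "\<And>y. y \<in> Y \<Longrightarrow> k y \<in> X" and hk: "\<And>y. y \<in> Y \<Longrightarrow> h (k y) = y"
    using conj by (rule unif_conjE) blast
  obtain e1 where "e1 > 0" and e1: "\<forall>x\<in>Y. \<forall>y\<in>Y. d' x y < e1 \<longrightarrow> d (k x) (k y) < e"
    using uk \<open>e > 0\<close> unfolding ucont_def by blast
  then obtain \<delta>1 where "\<delta>1 > 0" and \<delta>1: "\<forall>ys. (\<forall>n. ys n \<in> Y) \<and> (\<forall>n. d' (s (ys n)) (ys (Suc n)) < \<delta>1) \<longrightarrow>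
      (\<exists>y\<in>Y. \<forall>n. d' ((s ^^ n) y) (ys n) < e1)"
    using sh unfolding shadowing_def by blast
  then obtain \<delta> where "\<delta> > 0" and \<delta>: "\<forall>x\<in>X. \<forall>y\<in>X. d x y < \<delta> \<longrightarrow> d' (h x) (h y) < \<delta>1"
    using uh unfolding ucont_def by blast
  have "\<exists>x\<in>X. \<forall>n. d ((f ^^ n) x) (xs n) < e"
    if xs: "\<forall>n. xs n \<in> X" "\<forall>n. d (f (xs n)) (xs (Suc n)) < \<delta>" for xs
  proof -
    have "\<forall>n. h (xs n) \<in> Y"
      using xs(1) hY by blast
    moreover have "\<forall>n. d' (s (h (xs n))) (h (xs (Suc n))) < \<delta>1"
      using \<delta> xs fX hf by (metis image_subset_iff)
    ultimately obtain y where "y \<in> Y" and y: "\<forall>n. d' ((s ^^ n) y) (h (xs n)) < e1"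
      using \<delta>1[rule_format, of "\<lambda>n. h (xs n)"] by blast
    have "d (k (h ((f ^^ n) (k y)))) (k (h (xs n))) < e" for n
    proof -
      have orbit: "(f ^^ n) (k y) \<in> X"
        using funpow_in_invariant_set[OF fX kY[OF \<open>y \<in> Y\<close>]] .
      have "h ((f ^^ n) (k y)) = (s ^^ n) y"
        using funpow_conj[of X h f s, OF hf fX kY[OF \<open>y \<in> Y\<close>]] hk[OF \<open>y \<in> Y\<close>] by simp
      then have "d' (h ((f ^^ n) (k y))) (h (xs n)) < e1"
        using y by simp
      then show ?thesis
        using e1 hY[OF orbit] hY xs(1) by blast
    qed
    then have "\<forall>n. d ((f ^^ n) (k y)) (xs n) < e"
      using kh kY \<open>y \<in> Y\<close> xs(1) funpow_in_invariant_set[OF fX] by simp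
    with kY \<open>y \<in> Y\<close> show ?thesis by blast
  qed
  with \<open>\<delta> > 0\<close> show "\<exists>\<delta>>0. \<forall>xs. (\<forall>n. xs n \<in> X) \<and> (\<forall>n. d (f (xs n)) (xs (Suc n)) < \<delta>) \<longrightarrow>
      (\<exists>x\<in>X. \<forall>n. d ((f ^^ n) x) (xs n) < e)"
    by blast
qed

section \<open>Inverse limits of 1-step shifts\<close>

locale shift_inverse_system =
  fixes A :: "nat \<Rightarrow> nat set" and F :: "nat \<Rightarrow> (nat \<times> nat) set"
    and g :: "nat \<Rightarrow> (nat \<Rightarrow> nat) \<Rightarrow> (nat \<Rightarrow> nat)"
  assumes bonding_maps: "\<And>m. g m ` one_step_shift (A (Suc m)) (F (Suc m)) \<subseteq> one_step_shift (A m) (F m)"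
    and bonding_ucont: "\<And>m. ucont (one_step_shift (A (Suc m)) (F (Suc m))) shift_dist shift_dist (g m)"
    and bonding_commute:
      "\<And>m. \<forall>y\<in>one_step_shift (A (Suc m)) (F (Suc m)). shift_map (g m y) = g m (shift_map y)"
begin

abbreviation Y :: "nat \<Rightarrow> (nat \<Rightarrow> nat) set" where
  "Y m \<equiv> one_step_shift (A m) (F m)"

abbreviation Lim :: "(nat \<Rightarrow> nat \<Rightarrow> nat) set" where
  "Lim \<equiv> inv_lim (\<lambda>m. one_step_shift (A m) (F m)) g"

abbreviation Lim_dist :: "(nat \<Rightarrow> nat \<Rightarrow> nat) \<Rightarrow> (nat \<Rightarrow> nat \<Rightarrow> nat) \<Rightarrow> real" where
  "Lim_dist \<equiv> inv_lim_dist (\<lambda>m. shift_dist)"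

abbreviation Lim_shift :: "(nat \<Rightarrow> nat \<Rightarrow> nat) \<Rightarrow> (nat \<Rightarrow> nat \<Rightarrow> nat)" where
  "Lim_shift \<equiv> inv_lim_map (\<lambda>m. shift_map)"

lemma gcomp_in: "y \<in> Y (Suc (N + j)) \<Longrightarrow> gcomp g N j y \<in> Y N"
  using bonding_maps by (induction j arbitrary: y) auto

lemma gcomp_ucont: "ucont (Y (Suc (N + j))) shift_dist shift_dist (gcomp g N j)"
proof (induction j)
  case (Suc j)
  have "ucont (Y (Suc (N + Suc j))) shift_dist shift_dist (gcomp g N j \<circ> g (N + Suc j))"
    by (rule ucont_compose[OF Suc.IH bonding_ucont]) (use bonding_maps in simp)
  then show ?case by (simp only: gcomp.simps)
qed (simp add: bonding_ucont)

lemma gcomp_commute: "y \<in> Y (Suc (N + j)) \<Longrightarrow> shift_map (gcomp g N j y) = gcomp g N j (shift_map y)"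
proof (induction j arbitrary: y)
  case (Suc j)
  then have "g (N + Suc j) y \<in> Y (Suc (N + j))"
    using bonding_maps by auto
  with Suc show ?case
    using bonding_commute by simp
qed (simp add: bonding_commute)

lemma funpow_shift_map_gcomp:
  "y \<in> Y (Suc (N + j)) \<Longrightarrow> (shift_map ^^ n) (gcomp g N j y) = gcomp g N j ((shift_map ^^ n) y)"
  by (induction n) (simp_all add: gcomp_commute funpow_shift_map_in_one_step_shift)

lemma g_comp_gcomp: "g N \<circ> gcomp g (Suc N) j = gcomp g N (Suc j)"
  by (induction j) (simp_all add: fun_eq_iff)

lemma inv_lim_memI: "(\<And>m. x m \<in> Y m) \<Longrightarrow> (\<And>m. x m = g m (x (Suc m))) \<Longrightarrow> x \<in> Lim"
  unfolding inv_lim_def by blast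

lemma inv_lim_in: "x \<in> Lim \<Longrightarrow> x m \<in> Y m"
  and inv_lim_bonding: "x \<in> Lim \<Longrightarrow> x m = g m (x (Suc m))"
  unfolding inv_lim_def by blast+

lemma inv_lim_gcomp: "x \<in> Lim \<Longrightarrow> x N = gcomp g N j (x (Suc (N + j)))"
  by (induction j) (simp_all add: inv_lim_bonding[symmetric])

lemma inv_lim_map_in: "x \<in> Lim \<Longrightarrow> Lim_shift x \<in> Lim"
proof (rule inv_lim_memI)
  fix m assume x: "x \<in> Lim"
  show "Lim_shift x m \<in> Y m"
    unfolding inv_lim_map_def using shift_map_in_one_step_shift inv_lim_in[OF x] by blast
  show "Lim_shift x m = g m (Lim_shift x (Suc m))"
    unfolding inv_lim_map_def using inv_lim_bonding[OF x] inv_lim_in[OF x] bonding_commute by metis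
qed

lemma funpow_inv_lim_map: "(Lim_shift ^^ n) x = (\<lambda>m. (shift_map ^^ n) (x m))"
  by (induction n) (auto simp: inv_lim_map_def)

lemma funpow_inv_lim_map_in: "x \<in> Lim \<Longrightarrow> (Lim_shift ^^ n) x \<in> Lim"
  by (induction n) (auto simp: inv_lim_map_in)

lemma inv_lim_extend_thread:
  assumes v_in: "\<And>j. v j \<in> Y (N + j)" and v_bonding: "\<And>j. v j = g (N + j) (v (Suc j))"
  shows "\<exists>x\<in>Lim. x N = v 0"
proof
  define x where "x m = (if N \<le> m then v (m - N) else gcomp g m (N - Suc m) (v 0))" for m
  show "x \<in> Lim"
  proof (rule inv_lim_memI)
    fix m
    show "x m \<in> Y m"
    proof (cases "N \<le> m")
      case False
      then have "Suc (m + (N - Suc m)) = N" by simp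
      then show ?thesis using False v_in[of 0] gcomp_in[of "v 0" m "N - Suc m"] by (simp add: x_def)
    qed (use v_in[of "m - N"] in \<open>simp add: x_def\<close>)
    show "x m = g m (x (Suc m))"
    proof (cases "N \<le> m")
      case True
      then show ?thesis using v_bonding[of "m - N"] by (simp add: x_def Suc_diff_le)
    next
      case False
      then consider "Suc m = N" | "Suc m < N" by linarith
      then show ?thesis
      proof cases
        case 2
        then have "x m = gcomp g m (Suc (N - Suc (Suc m))) (v 0)"
          by (simp add: x_def Suc_diff_Suc)
        also have "\<dots> = g m (gcomp g (Suc m) (N - Suc (Suc m)) (v 0))"
          by (simp only: g_comp_gcomp[symmetric] comp_apply)
        also have "\<dots> = g m (x (Suc m))"
          using 2 by (simp add: x_def)
        finally show ?thesis .
      qed (simp add: x_def)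
    qed
  qed
  show "x N = v 0" by (simp add: x_def)
qed

lemma inv_lim_lower_coordinates_close:
  assumes "e > 0"
  shows "\<exists>\<eta>>0. \<forall>a\<in>Lim. \<forall>b\<in>Lim. shift_dist (a N) (b N) < \<eta> \<longrightarrow> (\<forall>m\<le>N. shift_dist (a m) (b m) < e)"
proof (induction N)
  case 0
  show ?case using assms by auto
next
  case (Suc N)
  then obtain \<eta>0 where "\<eta>0 > 0"
    and \<eta>0: "\<forall>a\<in>Lim. \<forall>b\<in>Lim. shift_dist (a N) (b N) < \<eta>0 \<longrightarrow> (\<forall>m\<le>N. shift_dist (a m) (b m) < e)"
    by blast
  then obtain \<eta>1 where "\<eta>1 > 0" and \<eta>1: "\<forall>x\<in>Y (Suc N). \<forall>y\<in>Y (Suc N).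
      shift_dist x y < \<eta>1 \<longrightarrow> shift_dist (g N x) (g N y) < \<eta>0"
    using bonding_ucont[of N] unfolding ucont_def by blast
  have "\<forall>m\<le>Suc N. shift_dist (a m) (b m) < e"
    if "a \<in> Lim" "b \<in> Lim" "shift_dist (a (Suc N)) (b (Suc N)) < min e \<eta>1" for a b
  proof -
    have "shift_dist (a N) (b N) < \<eta>0"
      using \<eta>1 that inv_lim_in inv_lim_bonding by (metis min_less_iff_conj)
    then have "\<forall>m\<le>N. shift_dist (a m) (b m) < e"
      using \<eta>0 that(1,2) by blast
    then show ?thesis
      using that(3) by (auto simp: le_Suc_eq)
  qed
  then show ?case
    using \<open>\<eta>1 > 0\<close> assms by (intro exI[of _ "min e \<eta>1"]) auto
qed

end

locale mittag_leffler_shift_system = shift_inverse_system +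
  assumes mittag_leffler: "mittag_leffler (\<lambda>m. one_step_shift (A m) (F m)) g"
begin

definition stable_index :: "nat \<Rightarrow> nat" where
  "stable_index N = (SOME k. k > N \<and>
     (\<forall>i\<ge>k. gcomp g N (k - N) ` Y (Suc k) = gcomp g N (i - N) ` Y (Suc i)))"

definition stable_image :: "nat \<Rightarrow> (nat \<Rightarrow> nat) set" where
  "stable_image N = gcomp g N (stable_index N - N) ` Y (Suc (stable_index N))"

lemma stable_index_gt: "N < stable_index N"
  and stable_image_eq: "stable_index N \<le> i \<Longrightarrow> stable_image N = gcomp g N (i - N) ` Y (Suc i)"
proof -
  have "\<exists>k. k > N \<and> (\<forall>i\<ge>k. gcomp g N (k - N) ` Y (Suc k) = gcomp g N (i - N) ` Y (Suc i))"
    using mittag_leffler unfolding mittag_leffler_def by blast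
  from someI_ex[OF this]
  show "N < stable_index N" "stable_index N \<le> i \<Longrightarrow> stable_image N = gcomp g N (i - N) ` Y (Suc i)"
    unfolding stable_image_def stable_index_def[symmetric] by auto
qed

lemma stable_image_subset: "stable_image N \<subseteq> Y N"
  using stable_index_gt[of N] gcomp_in[of _ N "stable_index N - N"]
  unfolding stable_image_def by auto

lemma g_stable_image: "g N ` stable_image (Suc N) = stable_image N"
proof -
  define i where "i = max (stable_index N) (stable_index (Suc N))"
  have "Suc (i - Suc N) = i - N"
    using stable_index_gt[of "Suc N"] unfolding i_def by linarith
  then have "g N ` stable_image (Suc N) = gcomp g N (i - N) ` Y (Suc i)"
    using stable_image_eq[of "Suc N" i] g_comp_gcomp[of N "i - Suc N"]
    unfolding i_def by (simp add: image_comp)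
  also have "\<dots> = stable_image N"
    using stable_image_eq[of N i] unfolding i_def by simp
  finally show ?thesis .
qed

lemma stable_image_lift: "w \<in> stable_image N \<Longrightarrow> \<exists>x\<in>Lim. x N = w"
proof -
  assume w: "w \<in> stable_image N"
  have "\<exists>v. \<forall>j. (v j \<in> stable_image (N + j) \<and> (j = 0 \<longrightarrow> v j = w)) \<and> g (N + j) (v (Suc j)) = v j"
  proof (rule dependent_nat_choice)
    fix u j assume "u \<in> stable_image (N + j) \<and> (j = 0 \<longrightarrow> u = w)"
    then show "\<exists>u'. (u' \<in> stable_image (N + Suc j) \<and> (Suc j = 0 \<longrightarrow> u' = w)) \<and> g (N + j) u' = u"
      using g_stable_image[of "N + j"] by force
  qed (use w in auto)
  then obtain v where "\<And>j. v j \<in> stable_image (N + j)" "v 0 = w" "\<And>j. v j = g (N + j) (v (Suc j))"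
    by metis
  then show ?thesis
    using inv_lim_extend_thread[of v N] stable_image_subset by blast
qed

lemma stable_index_lift:
  assumes z: "z \<in> Y (Suc (stable_index N))"
  shows "\<exists>x\<in>Lim. \<forall>n. (Lim_shift ^^ n) x N = gcomp g N (stable_index N - N) ((shift_map ^^ n) z)"
proof -
  have K: "Suc (N + (stable_index N - N)) = Suc (stable_index N)"
    using stable_index_gt[of N] by simp
  have "gcomp g N (stable_index N - N) z \<in> stable_image N"
    using z unfolding stable_image_def by simp
  then obtain x where "x \<in> Lim" and x: "x N = gcomp g N (stable_index N - N) z"
    using stable_image_lift by blast
  moreover have "(Lim_shift ^^ n) x N = gcomp g N (stable_index N - N) ((shift_map ^^ n) z)" for n
    unfolding funpow_inv_lim_map x using funpow_shift_map_gcomp z K by simp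
  ultimately show ?thesis by blast
qed

text \<open>The pseudo-orbit is read at level \<open>K + 1\<close>, where \<open>K\<close> is the stabilisation index of \<open>N\<close>, and
  shadowed there inside the 1-step shift; the shadowing point is mapped down to the stable image
  at level \<open>N\<close>, from where it lifts to the inverse limit.\<close>
lemma inv_lim_shadowing_at_level:
  assumes "\<eta> > 0"
  shows "\<exists>\<delta>>0. \<forall>Q. (\<forall>n. Q n \<in> Lim) \<and> (\<forall>n. Lim_dist (Lim_shift (Q n)) (Q (Suc n)) < \<delta>) \<longrightarrow>
           (\<exists>x\<in>Lim. \<forall>n. shift_dist ((Lim_shift ^^ n) x N) (Q n N) < \<eta>)"
proof -
  define K where "K = stable_index N"
  define p where "p = gcomp g N (K - N)"
  have K: "Suc (N + (K - N)) = Suc K"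
    using stable_index_gt[of N] unfolding K_def by simp
  obtain \<theta> where "\<theta> > 0"
    and \<theta>: "\<forall>y\<in>Y (Suc K). \<forall>y'\<in>Y (Suc K). shift_dist y y' < \<theta> \<longrightarrow> shift_dist (p y) (p y') < \<eta>"
    using gcomp_ucont[of N "K - N"] assms unfolding ucont_def K p_def by blast
  then obtain R where R: "1 / real (Suc R) < \<theta>"
    by (metis nat_approx_posE)
  define \<delta> where "\<delta> = 1 / real (Suc R) / real (Suc (Suc K))"
  have "\<exists>x\<in>Lim. \<forall>n. shift_dist ((Lim_shift ^^ n) x N) (Q n N) < \<eta>"
    if Q: "\<forall>n. Q n \<in> Lim" "\<forall>n. Lim_dist (Lim_shift (Q n)) (Q (Suc n)) < \<delta>" for Q
  proof -
    define q where "q n = Q n (Suc K)" for n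
    have q_in: "q n \<in> Y (Suc K)" for n
      using Q(1) inv_lim_in unfolding q_def by blast
    have "shift_dist (shift_map (q n)) (q (Suc n)) < 1 / real (Suc R)" for n
      using shift_dist_less_if_inv_lim_dist_less[of "Lim_shift (Q n)" "Q (Suc n)" _ "Suc K"] Q(2)
      unfolding q_def \<delta>_def by (simp add: inv_lim_map_def)
    note shadowed = one_step_shift_pseudo_orbit_shadowed[of q, OF q_in this]
    define z where "z = (\<lambda>n. q n 0)"
    have z_in: "z \<in> Y (Suc K)" and z: "\<And>n. shift_dist ((shift_map ^^ n) z) (q n) < \<theta>"
      using shadowed R unfolding z_def by (blast, meson order_less_trans)
    then obtain x where "x \<in> Lim" and x: "\<And>n. (Lim_shift ^^ n) x N = p ((shift_map ^^ n) z)"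
      using stable_index_lift unfolding K_def p_def by blast
    have "Q n N = p (q n)" for n
      unfolding q_def p_def using inv_lim_gcomp[of "Q n" N "K - N"] Q(1) K by simp
    then have "shift_dist ((Lim_shift ^^ n) x N) (Q n N) < \<eta>" for n
      using \<theta> x z[of n] q_in funpow_shift_map_in_one_step_shift[OF z_in] by simp
    with \<open>x \<in> Lim\<close> show ?thesis by blast
  qed
  moreover have "\<delta> > 0"
    unfolding \<delta>_def by simp
  ultimately show ?thesis by blast
qed

theorem shadowing_inv_lim: "shadowing Lim Lim_dist Lim_shift"
  unfolding shadowing_def
proof (intro allI impI)
  fix e :: real assume "e > 0"
  then obtain N where N: "1 / real (Suc N) < e"
    by (metis nat_approx_posE)
  obtain \<eta> where "\<eta> > 0" and \<eta>: "\<forall>a\<in>Lim. \<forall>b\<in>Lim.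
      shift_dist (a N) (b N) < \<eta> \<longrightarrow> (\<forall>m\<le>N. shift_dist (a m) (b m) < 1 / real (Suc N))"
    using inv_lim_lower_coordinates_close[of "1 / real (Suc N)" N] by auto
  obtain \<delta> where "\<delta> > 0" and \<delta>: "\<forall>Q. (\<forall>n. Q n \<in> Lim) \<and> (\<forall>n. Lim_dist (Lim_shift (Q n)) (Q (Suc n)) < \<delta>) \<longrightarrow>
      (\<exists>x\<in>Lim. \<forall>n. shift_dist ((Lim_shift ^^ n) x N) (Q n N) < \<eta>)"
    using inv_lim_shadowing_at_level[OF \<open>\<eta> > 0\<close>] by blast
  have "\<exists>x\<in>Lim. \<forall>n. Lim_dist ((Lim_shift ^^ n) x) (Q n) < e"
    if Q: "\<forall>n. Q n \<in> Lim" "\<forall>n. Lim_dist (Lim_shift (Q n)) (Q (Suc n)) < \<delta>" for Q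
  proof -
    obtain x where "x \<in> Lim" and x: "\<forall>n. shift_dist ((Lim_shift ^^ n) x N) (Q n N) < \<eta>"
      using \<delta>[rule_format, of Q] Q by blast
    have "Lim_dist ((Lim_shift ^^ n) x) (Q n) \<le> 1 / real (Suc N)" for n
    proof (rule inv_lim_dist_le_if_agree)
      fix m i assume "m \<le> N" "i \<le> N"
      then show "(Lim_shift ^^ n) x m i = Q n m i"
        using \<eta> x funpow_inv_lim_map_in[OF \<open>x \<in> Lim\<close>] Q(1) shift_dist_less_iff by blast
    qed
    with N \<open>x \<in> Lim\<close> show ?thesis
      by (meson le_less_trans)
  qed
  with \<open>\<delta> > 0\<close> show "\<exists>\<delta>>0. \<forall>Q. (\<forall>n. Q n \<in> Lim) \<and> (\<forall>n. Lim_dist (Lim_shift (Q n)) (Q (Suc n)) < \<delta>) \<longrightarrow>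
      (\<exists>x\<in>Lim. \<forall>n. Lim_dist ((Lim_shift ^^ n) x) (Q n) < e)"
    by blast
qed

end
section \<open>Coding a system by a complete tame defining sequence\<close>

lemma separable_space_dense_sequence:
  assumes "separable_space T" "topspace T \<noteq> {}"
  shows "\<exists>D :: nat \<Rightarrow> 'a. range D \<subseteq> topspace T \<and> (\<forall>V. openin T V \<and> V \<noteq> {} \<longrightarrow> (\<exists>j. D j \<in> V))"
proof -
  obtain C where C: "countable C" "C \<subseteq> topspace T" "T closure_of C = topspace T"
    using assms(1) unfolding separable_space_def by blast
  then have "C \<noteq> {}"
    using assms(2) by (metis closure_of_empty)
  have "\<exists>j. from_nat_into C j \<in> V" if V: "openin T V" "V \<noteq> {}" for V
  proof -
    obtain x where "x \<in> V" using V(2) by blast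
    then have "x \<in> T closure_of C"
      using openin_subset[OF V(1)] C(3) by blast
    then obtain y where "y \<in> C" "y \<in> V"
      using \<open>x \<in> V\<close> V(1) unfolding in_closure_of by blast
    then show ?thesis
      using from_nat_into_surj[OF C(1)] by metis
  qed
  moreover have "range (from_nat_into C) \<subseteq> topspace T"
    using from_nat_into[OF \<open>C \<noteq> {}\<close>] C(2) by blast
  ultimately show ?thesis by blast
qed

lemma (in Metric_space) ucont_eq_if_graph_approximable:
  assumes "ucont M d d f" "f ` M \<subseteq> M" "x \<in> M" "y \<in> M"
    and approx: "\<And>e. e > 0 \<Longrightarrow> \<exists>a\<in>M. d a x < e \<and> d (f a) y < e"
  shows "f x = y"
proof (rule ccontr)
  assume "f x \<noteq> y"
  define r where "r = d (f x) y"
  have "f x \<in> M" using assms(2,3) by blast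
  then have "r > 0"
    unfolding r_def using mdist_pos_less \<open>f x \<noteq> y\<close> assms(4) by blast
  then have "r / 2 > 0" by simp
  then obtain \<delta> where "\<delta> > 0" and \<delta>: "\<forall>a\<in>M. \<forall>b\<in>M. d a b < \<delta> \<longrightarrow> d (f a) (f b) < r / 2"
    using assms(1)[unfolded ucont_def, rule_format, of "r / 2"] by blast
  obtain a where a: "a \<in> M" "d a x < min \<delta> (r / 2)" "d (f a) y < min \<delta> (r / 2)"
    using approx[of "min \<delta> (r / 2)"] \<open>\<delta> > 0\<close> \<open>r > 0\<close> by auto
  then have "d (f a) (f x) < r / 2"
    using \<delta> assms(3) by auto
  then have "d (f x) (f a) < r / 2"
    by (simp add: commute)
  moreover have "d (f x) y \<le> d (f x) (f a) + d (f a) y"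
    using triangle[OF \<open>f x \<in> M\<close> _ assms(4)] assms(2) a(1) by blast
  ultimately show False
    using a(3) unfolding r_def by linarith
qed

locale tame_coding = Metric_space X d
  for X :: "'a set" and d +
  fixes f :: "'a \<Rightarrow> 'a" and \<U> :: "nat \<Rightarrow> 'a set set"
  assumes X_nonempty: "X \<noteq> {}"
    and separable: "separable_space mtopology"
    and f_into: "f ` X \<subseteq> X"
    and f_ucont: "ucont X d d f"
    and defining: "defining_sequence X d \<U>"
    and complete: "complete_defseq \<U>"
    and tame: "tame_defseq d \<U>"
begin

lemma f_in: "x \<in> X \<Longrightarrow> f x \<in> X"
  using f_into by blast

lemma funpow_f_in: "x \<in> X \<Longrightarrow> (f ^^ t) x \<in> X"
  using funpow_in_invariant_set[OF f_into] .

lemma partition: "is_partition X d (\<U> n)"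
  using defining unfolding defining_sequence_def by blast

lemma partition_subset: "V \<in> \<U> n \<Longrightarrow> V \<subseteq> X"
  using partition unfolding is_partition_def by blast

lemma partition_open: "V \<in> \<U> n \<Longrightarrow> openin mtopology V"
  using partition unfolding is_partition_def clopen_in_def by blast

lemma partition_cover: "x \<in> X \<Longrightarrow> \<exists>V\<in>\<U> n. x \<in> V"
  using partition unfolding is_partition_def by blast

lemma partition_disjoint: "V \<in> \<U> n \<Longrightarrow> W \<in> \<U> n \<Longrightarrow> x \<in> V \<Longrightarrow> x \<in> W \<Longrightarrow> V = W"
  using partition[of n] unfolding is_partition_def pairwise_def disjnt_def by blast

definition cell :: "nat \<Rightarrow> 'a \<Rightarrow> 'a set" where
  "cell n x = (SOME V. V \<in> \<U> n \<and> x \<in> V)"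

lemma cell_in: "x \<in> X \<Longrightarrow> cell n x \<in> \<U> n"
  and mem_cell: "x \<in> X \<Longrightarrow> x \<in> cell n x"
proof -
  assume "x \<in> X"
  then have "\<exists>V. V \<in> \<U> n \<and> x \<in> V"
    using partition_cover by blast
  from someI_ex[OF this] show "cell n x \<in> \<U> n" "x \<in> cell n x"
    unfolding cell_def by blast+
qed

lemma cell_eqI:
  assumes "V \<in> \<U> n" "x \<in> V"
  shows "cell n x = V"
proof -
  have "x \<in> X"
    using assms partition_subset by blast
  show ?thesis
    using partition_disjoint[OF cell_in[OF \<open>x \<in> X\<close>] assms(1) mem_cell[OF \<open>x \<in> X\<close>] assms(2)] .
qed

lemma cell_Suc_subset: "x \<in> X \<Longrightarrow> cell (Suc n) x \<subseteq> cell n x"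
proof -
  assume x: "x \<in> X"
  obtain W where W: "W \<in> \<U> n" "cell (Suc n) x \<subseteq> W"
    using defining cell_in[OF x] unfolding defining_sequence_def by blast
  then have "x \<in> W"
    using mem_cell[OF x] by blast
  with W show ?thesis
    using cell_eqI[OF W(1)] by simp
qed

lemma cell_antimono: "n \<le> n' \<Longrightarrow> x \<in> X \<Longrightarrow> cell n' x \<subseteq> cell n x"
proof (induction n' rule: dec_induct)
  case (step k)
  then show ?case
    using cell_Suc_subset[of x k] by blast
qed simp

lemma cell_eq_coarser:
  assumes "n \<le> n'" "x \<in> X" "y \<in> X" "cell n' x = cell n' y"
  shows "cell n x = cell n y"
proof -
  have "y \<in> cell n' x"
    using assms(3,4) mem_cell by simp
  then have "y \<in> cell n x"
    using cell_antimono[OF assms(1,2)] by blast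
  then show ?thesis
    using cell_eqI[OF cell_in[OF assms(2)]] by simp
qed

definition dense_seq :: "nat \<Rightarrow> 'a" where
  "dense_seq = (SOME D. range D \<subseteq> X \<and> (\<forall>V. openin mtopology V \<and> V \<noteq> {} \<longrightarrow> (\<exists>j. D j \<in> V)))"

lemma dense_seq_in: "dense_seq j \<in> X"
  and dense_seq_cell: "x \<in> X \<Longrightarrow> \<exists>j. dense_seq j \<in> cell n x"
proof -
  have "\<exists>D :: nat \<Rightarrow> 'a. range D \<subseteq> X \<and> (\<forall>V. openin mtopology V \<and> V \<noteq> {} \<longrightarrow> (\<exists>j. D j \<in> V))"
    using separable_space_dense_sequence[OF separable] X_nonempty by simp
  from someI_ex[OF this] have D: "range dense_seq \<subseteq> X"
    "\<And>V. openin mtopology V \<Longrightarrow> V \<noteq> {} \<Longrightarrow> \<exists>j. dense_seq j \<in> V"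
    unfolding dense_seq_def[symmetric] by blast+
  show "dense_seq j \<in> X" using D(1) by blast
  show "x \<in> X \<Longrightarrow> \<exists>j. dense_seq j \<in> cell n x"
    using D(2)[OF partition_open[OF cell_in]] mem_cell by blast
qed

definition level :: "nat \<Rightarrow> nat" where
  "level M = (LEAST n. M \<le> n \<and> (\<forall>n'\<ge>n. \<forall>B\<in>\<U> n'. \<forall>x\<in>B. \<forall>y\<in>B. d x y < 1 / real (Suc M)))"

lemma level_ge: "M \<le> level M"
  and level_diameter: "level M \<le> n \<Longrightarrow> B \<in> \<U> n \<Longrightarrow> x \<in> B \<Longrightarrow> y \<in> B \<Longrightarrow> d x y < 1 / real (Suc M)"
proof -
  have "\<forall>e>0. \<exists>N. \<forall>n\<ge>N. \<forall>B\<in>\<U> n. \<forall>x\<in>B. \<forall>y\<in>B. d x y < e"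
    using tame unfolding tame_defseq_def by (rule conjunct1)
  then have "\<exists>N. \<forall>n\<ge>N. \<forall>B\<in>\<U> n. \<forall>x\<in>B. \<forall>y\<in>B. d x y < 1 / real (Suc M)"
    by simp
  then obtain N where "\<forall>n\<ge>N. \<forall>B\<in>\<U> n. \<forall>x\<in>B. \<forall>y\<in>B. d x y < 1 / real (Suc M)" ..
  then have "M \<le> max N M \<and> (\<forall>n'\<ge>max N M. \<forall>B\<in>\<U> n'. \<forall>x\<in>B. \<forall>y\<in>B. d x y < 1 / real (Suc M))"
    by (meson max.boundedE max.cobounded2)
  then have "M \<le> level M \<and> (\<forall>n'\<ge>level M. \<forall>B\<in>\<U> n'. \<forall>x\<in>B. \<forall>y\<in>B. d x y < 1 / real (Suc M))"
    unfolding level_def by (rule LeastI)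
  then show "M \<le> level M" "level M \<le> n \<Longrightarrow> B \<in> \<U> n \<Longrightarrow> x \<in> B \<Longrightarrow> y \<in> B \<Longrightarrow> d x y < 1 / real (Suc M)"
    by blast+
qed

lemma level_mono: "M \<le> M' \<Longrightarrow> level M \<le> level M'"
proof -
  assume "M \<le> M'"
  then have "1 / real (Suc M') \<le> 1 / real (Suc M)"
    by (simp add: frac_le)
  then have "d x y < 1 / real (Suc M)"
    if "level M' \<le> n'" "B \<in> \<U> n'" "x \<in> B" "y \<in> B" for n' B x y
    using level_diameter[OF that] by linarith
  then have "\<forall>n'\<ge>level M'. \<forall>B\<in>\<U> n'. \<forall>x\<in>B. \<forall>y\<in>B. d x y < 1 / real (Suc M)"
    by blast
  then show "level M \<le> level M'"
    unfolding level_def[of M] using \<open>M \<le> M'\<close> level_ge[of M'] by (intro Least_le) simp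
qed

definition gap :: "nat \<Rightarrow> real" where
  "gap n = (SOME \<rho>. \<rho> > 0 \<and> (\<forall>B\<in>\<U> n. \<forall>B'\<in>\<U> n. B \<noteq> B' \<longrightarrow> (\<forall>x\<in>B. \<forall>y\<in>B'. \<rho> \<le> d x y)))"

lemma gap_pos: "gap n > 0"
  and gap_le: "B \<in> \<U> n \<Longrightarrow> B' \<in> \<U> n \<Longrightarrow> B \<noteq> B' \<Longrightarrow> x \<in> B \<Longrightarrow> y \<in> B' \<Longrightarrow> gap n \<le> d x y"
proof -
  have "\<exists>\<rho>>0. \<forall>B\<in>\<U> n. \<forall>B'\<in>\<U> n. B \<noteq> B' \<longrightarrow> (\<forall>x\<in>B. \<forall>y\<in>B'. \<rho> \<le> d x y)"
    using tame unfolding tame_defseq_def by (rule conjunct2[THEN spec])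
  from someI_ex[OF this]
  show "gap n > 0" "B \<in> \<U> n \<Longrightarrow> B' \<in> \<U> n \<Longrightarrow> B \<noteq> B' \<Longrightarrow> x \<in> B \<Longrightarrow> y \<in> B' \<Longrightarrow> gap n \<le> d x y"
    unfolding gap_def by blast+
qed

definition code :: "nat \<Rightarrow> 'a \<Rightarrow> nat" where
  "code M x = (LEAST j. dense_seq j \<in> cell (level M) x)"

lemma dense_seq_code: "x \<in> X \<Longrightarrow> dense_seq (code M x) \<in> cell (level M) x"
  unfolding code_def using dense_seq_cell by (rule LeastI_ex)

lemma code_eq_iff:
  assumes "x \<in> X" "y \<in> X"
  shows "code M x = code M y \<longleftrightarrow> cell (level M) x = cell (level M) y"
proof
  assume "code M x = code M y"
  then have "dense_seq (code M x) \<in> cell (level M) x" "dense_seq (code M x) \<in> cell (level M) y"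
    using dense_seq_code assms by metis+
  then show "cell (level M) x = cell (level M) y"
    using cell_eqI[OF cell_in[OF assms(1)]] cell_eqI[OF cell_in[OF assms(2)]] by metis
qed (simp add: code_def)

lemma dist_less_if_code_eq:
  assumes "x \<in> X" "y \<in> X" "code M x = code M y"
  shows "d x y < 1 / real (Suc M)"
proof -
  have "y \<in> cell (level M) x"
    using assms code_eq_iff mem_cell by simp
  then show ?thesis
    using level_diameter[OF order_refl cell_in mem_cell] assms(1) by blast
qed

lemma code_eq_if_dist_less:
  assumes "x \<in> X" "y \<in> X" "d x y < gap (level M)"
  shows "code M x = code M y"
proof (rule ccontr)
  assume "code M x \<noteq> code M y"
  then have "cell (level M) x \<noteq> cell (level M) y"
    using code_eq_iff assms by simp
  then have "gap (level M) \<le> d x y"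
    using gap_le[OF cell_in[OF assms(1)] cell_in[OF assms(2)] _ mem_cell[OF assms(1)] mem_cell[OF assms(2)]]
    by blast
  with assms(3) show False by simp
qed

lemma code_eq_coarser:
  assumes "N \<le> M" "x \<in> X" "y \<in> X" "code M x = code M y"
  shows "code N x = code N y"
  using assms cell_eq_coarser[OF level_mono[OF assms(1)] assms(2,3)] code_eq_iff by simp

lemma code_dense_seq_code:
  assumes "N \<le> M" "x \<in> X"
  shows "code N (dense_seq (code M x)) = code N x"
proof -
  have "cell (level M) (dense_seq (code M x)) = cell (level M) x"
    using cell_eqI[OF cell_in[OF assms(2)] dense_seq_code[OF assms(2)]] .
  then have "code M (dense_seq (code M x)) = code M x"
    using code_eq_iff[OF dense_seq_in assms(2)] by blast
  then show ?thesis
    using code_eq_coarser[OF assms(1) dense_seq_in assms(2)] by blast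
qed

definition alphabet :: "nat \<Rightarrow> nat set" where
  "alphabet M = code M ` X"

definition forbidden :: "nat \<Rightarrow> (nat \<times> nat) set" where
  "forbidden M = {(a, b). \<not> (\<exists>x\<in>X. code M x = a \<and> code M (f x) = b)}"

abbreviation coded_shift :: "nat \<Rightarrow> (nat \<Rightarrow> nat) set" where
  "coded_shift M \<equiv> one_step_shift (alphabet M) (forbidden M)"

text \<open>Decode a symbol to a point carrying it and re-encode that point at the coarser scale; by
  \<open>code_dense_seq_code\<close> the result does not depend on the point.\<close>
definition recode :: "nat \<Rightarrow> (nat \<Rightarrow> nat) \<Rightarrow> (nat \<Rightarrow> nat)" where
  "recode M y = (\<lambda>t. code M (dense_seq (y t)))"

definition itinerary :: "'a \<Rightarrow> nat \<Rightarrow> nat \<Rightarrow> nat" where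
  "itinerary x = (\<lambda>M t. code M ((f ^^ t) x))"

lemma itinerary_in_coded_shift: "x \<in> X \<Longrightarrow> itinerary x M \<in> coded_shift M"
  unfolding one_step_shift_def alphabet_def forbidden_def itinerary_def
  using funpow_f_in by auto

lemma coded_shift_nonempty: "coded_shift M \<noteq> {}"
  using itinerary_in_coded_shift X_nonempty by blast

lemma coded_shift_word: "y \<in> coded_shift M \<Longrightarrow> \<exists>x\<in>X. code M x = y t \<and> code M (f x) = y (Suc t)"
  unfolding one_step_shift_def forbidden_def by blast

lemma recode_code: "N \<le> M \<Longrightarrow> x \<in> X \<Longrightarrow> y t = code M x \<Longrightarrow> recode N y t = code N x"
  unfolding recode_def using code_dense_seq_code by simp

lemma recode_itinerary: "N \<le> M \<Longrightarrow> x \<in> X \<Longrightarrow> recode N (itinerary x M) = itinerary x N"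
  unfolding recode_def itinerary_def using code_dense_seq_code funpow_f_in by simp

lemma recode_in_coded_shift:
  assumes y: "y \<in> coded_shift (Suc M)"
  shows "recode M y \<in> coded_shift M"
  unfolding one_step_shift_def
proof (intro CollectI conjI allI)
  fix t
  obtain x where x: "x \<in> X" "code (Suc M) x = y t" "code (Suc M) (f x) = y (Suc t)"
    using coded_shift_word[OF y] by blast
  then have "recode M y t = code M x" "recode M y (Suc t) = code M (f x)"
    using recode_code[of M "Suc M"] f_in by simp_all
  with x(1) show "recode M y t \<in> alphabet M" "(recode M y t, recode M y (Suc t)) \<notin> forbidden M"
    unfolding alphabet_def forbidden_def by auto
qed

lemma recode_ucont: "ucont Z shift_dist shift_dist (recode M)"
  unfolding ucont_def
proof (intro allI impI)
  fix e :: real assume "e > 0"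
  then obtain K where K: "1 / real (Suc K) < e"
    by (metis nat_approx_posE)
  have "shift_dist (recode M y) (recode M z) < e" if "shift_dist y z < 1 / real (Suc K)" for y z
  proof -
    have "shift_dist (recode M y) (recode M z) < 1 / real (Suc K)"
      using that unfolding shift_dist_less_iff recode_def by simp
    with K show ?thesis by linarith
  qed
  then show "\<exists>\<delta>>0. \<forall>y\<in>Z. \<forall>z\<in>Z. shift_dist y z < \<delta> \<longrightarrow> shift_dist (recode M y) (recode M z) < e"
    by (intro exI[of _ "1 / real (Suc K)"]) auto
qed

lemma recode_shift_map: "shift_map (recode M y) = recode M (shift_map y)"
  by (simp add: recode_def shift_map_def)

lemma gcomp_recode: "gcomp recode N j = recode N"
proof (induction j)
  case (Suc j)
  have "recode N (recode (N + Suc j) y) = recode N y" for y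
    by (simp add: recode_def code_dense_seq_code dense_seq_in)
  then show ?case
    by (simp add: Suc fun_eq_iff)
qed simp

abbreviation coded_inv_lim :: "(nat \<Rightarrow> nat \<Rightarrow> nat) set" where
  "coded_inv_lim \<equiv> inv_lim (\<lambda>m. one_step_shift (alphabet m) (forbidden m)) recode"

lemma itinerary_in_inv_lim: "x \<in> X \<Longrightarrow> itinerary x \<in> coded_inv_lim"
  unfolding inv_lim_def
proof (intro CollectI conjI allI)
  fix m assume "x \<in> X"
  then show "itinerary x m \<in> coded_shift m"
    by (rule itinerary_in_coded_shift)
  show "itinerary x m = recode m (itinerary x (Suc m))"
    using recode_itinerary[of m "Suc m"] \<open>x \<in> X\<close> by simp
qed

lemma inj_on_itinerary: "inj_on itinerary X"
proof (rule inj_onI, rule ccontr)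
  fix x y assume xy: "x \<in> X" "y \<in> X" "itinerary x = itinerary y" and "x \<noteq> y"
  then obtain M where M: "1 / real (Suc M) < d x y"
    by (metis nat_approx_posE mdist_pos_less)
  have "code M x = code M y"
    using fun_cong[OF fun_cong[OF xy(3), of M], of 0] by (simp add: itinerary_def)
  with xy(1,2) M show False
    using dist_less_if_code_eq by fastforce
qed

text \<open>Completeness of the defining sequence enters here: the cells of the points \<open>z m\<close> at their
  own levels are nested.\<close>
lemma consistent_codes_realised:
  assumes z_in: "\<And>m. z m \<in> X" and consistent: "\<And>m. code m (z (Suc m)) = code m (z m)"
  shows "\<exists>p\<in>X. \<forall>m. code m p = code m (z m)"
proof -
  have cell_z_Suc: "cell (level m) (z (Suc m)) = cell (level m) (z m)" for m
    using code_eq_iff[OF z_in z_in] consistent by metis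
  have cell_z: "cell (level m) (z m') = cell (level m) (z m)" if "m \<le> m'" for m m'
    using that
  proof (induction m' rule: dec_induct)
    case (step k)
    then show ?case
      using cell_eq_coarser[OF level_mono[OF step.hyps(1)] z_in z_in cell_z_Suc[of k]] by simp
  qed simp
  define V where "V n = cell n (z n)" for n
  have "V n \<in> \<U> n \<and> V (Suc n) \<subseteq> V n" for n
  proof
    show "V n \<in> \<U> n"
      unfolding V_def using cell_in[OF z_in] .
    have "cell n (z (Suc n)) = cell n (z n)"
      using cell_eq_coarser[OF level_ge z_in z_in cell_z_Suc[of n]] .
    then show "V (Suc n) \<subseteq> V n"
      unfolding V_def using cell_Suc_subset[OF z_in] by metis
  qed
  then have "\<Inter> (range V) \<noteq> {}"
    using complete unfolding complete_defseq_def by blast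
  then obtain p where p: "\<And>n. p \<in> V n"
    by blast
  have "p \<in> X"
    using p[of 0] partition_subset[OF cell_in[OF z_in]] unfolding V_def by blast
  moreover have "code m p = code m (z m)" for m
  proof -
    have "p \<in> cell (level m) (z m)"
      using p[of "level m"] cell_z[OF level_ge] unfolding V_def by simp
    then have "cell (level m) p = cell (level m) (z m)"
      using cell_eqI[OF cell_in[OF z_in]] by blast
    then show ?thesis
      using code_eq_iff[OF \<open>p \<in> X\<close> z_in] by simp
  qed
  ultimately show ?thesis by blast
qed

lemma compatible_codes_realised:
  assumes in_alphabet: "\<And>m. s m \<in> alphabet m"
    and compatible: "\<And>m. s m = code m (dense_seq (s (Suc m)))"
  shows "\<exists>p\<in>X. \<forall>m. code m p = s m"
proof -
  have code_s: "code m (dense_seq (s m)) = s m" for m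
    using in_alphabet[of m] code_dense_seq_code[OF order_refl] unfolding alphabet_def by auto
  then have "code m (dense_seq (s (Suc m))) = code m (dense_seq (s m))" for m
    using compatible by metis
  then show ?thesis
    using consistent_codes_realised[OF dense_seq_in] code_s by metis
qed

lemma itinerary_onto: "w \<in> coded_inv_lim \<Longrightarrow> \<exists>x\<in>X. itinerary x = w"
proof -
  assume w: "w \<in> coded_inv_lim"
  have "\<exists>p\<in>X. \<forall>m. code m p = w m t" for t
  proof (rule compatible_codes_realised)
    show "w m t \<in> alphabet m" for m
      using w unfolding inv_lim_def one_step_shift_def by blast
    have "w m = recode m (w (Suc m))" for m
      using w unfolding inv_lim_def by blast
    then show "w m t = code m (dense_seq (w (Suc m) t))" for m
      unfolding recode_def by metis
  qed
  then obtain p where "\<forall>t. p t \<in> X \<and> (\<forall>m. code m (p t) = w m t)"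
    by (metis choice)
  then have p_in: "\<And>t. p t \<in> X" and p: "\<And>t m. code m (p t) = w m t"
    by blast+
  have "f (p t) = p (Suc t)" for t
  proof (rule ucont_eq_if_graph_approximable[OF f_ucont f_into p_in p_in])
    fix e :: real assume "e > 0"
    then obtain m where m: "1 / real (Suc m) < e"
      by (metis nat_approx_posE)
    have "w m \<in> coded_shift m"
      using w unfolding inv_lim_def by blast
    then obtain a where a: "a \<in> X" "code m a = code m (p t)" "code m (f a) = code m (p (Suc t))"
      using coded_shift_word p by metis
    then have "d a (p t) < 1 / real (Suc m)" "d (f a) (p (Suc t)) < 1 / real (Suc m)"
      using dist_less_if_code_eq f_in p_in by blast+
    with a(1) m show "\<exists>a\<in>X. d a (p t) < e \<and> d (f a) (p (Suc t)) < e"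
      by force
  qed
  then have "(f ^^ t) (p 0) = p t" for t
    by (induction t) auto
  then have "itinerary (p 0) = w"
    by (simp add: itinerary_def p fun_eq_iff)
  with p_in show ?thesis by blast
qed

lemma bij_betw_itinerary: "bij_betw itinerary X coded_inv_lim"
  unfolding bij_betw_def using inj_on_itinerary itinerary_in_inv_lim itinerary_onto by blast

lemma ucont_itinerary: "ucont X d (inv_lim_dist (\<lambda>m. shift_dist)) itinerary"
  unfolding ucont_def
proof (intro allI impI)
  fix e :: real assume "e > 0"
  then obtain K where K: "1 / real (Suc K) < e"
    by (metis nat_approx_posE)
  obtain \<delta> where "\<delta> > 0"
    and \<delta>: "\<forall>x\<in>X. \<forall>y\<in>X. d x y < \<delta> \<longrightarrow> (\<forall>t\<le>K. d ((f ^^ t) x) ((f ^^ t) y) < gap (level K))"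
    using ucont_iterates_equicontinuous[OF f_ucont f_into gap_pos] by blast
  have "inv_lim_dist (\<lambda>m. shift_dist) (itinerary x) (itinerary y) < e"
    if "x \<in> X" "y \<in> X" "d x y < \<delta>" for x y
  proof -
    have "code m ((f ^^ t) x) = code m ((f ^^ t) y)" if "m \<le> K" "t \<le> K" for m t
      using \<delta> \<open>x \<in> X\<close> \<open>y \<in> X\<close> \<open>d x y < \<delta>\<close> that funpow_f_in
        code_eq_if_dist_less code_eq_coarser[OF \<open>m \<le> K\<close>] by meson
    then have "inv_lim_dist (\<lambda>m. shift_dist) (itinerary x) (itinerary y) \<le> 1 / real (Suc K)"
      by (intro inv_lim_dist_le_if_agree) (simp add: itinerary_def)
    with K show ?thesis by linarith
  qed
  with \<open>\<delta> > 0\<close> show "\<exists>\<delta>>0. \<forall>x\<in>X. \<forall>y\<in>X. d x y < \<delta> \<longrightarrow>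
      inv_lim_dist (\<lambda>m. shift_dist) (itinerary x) (itinerary y) < e"
    by blast
qed

lemma ucont_inv_itinerary:
  "ucont coded_inv_lim (inv_lim_dist (\<lambda>m. shift_dist)) d (inv_into X itinerary)"
  unfolding ucont_def
proof (intro allI impI)
  fix e :: real assume "e > 0"
  then obtain M where M: "1 / real (Suc M) < e"
    by (metis nat_approx_posE)
  have "d (inv_into X itinerary w) (inv_into X itinerary w') < e"
    if "w \<in> coded_inv_lim" "w' \<in> coded_inv_lim"
      and close: "inv_lim_dist (\<lambda>m. shift_dist) w w' < 1 / real (Suc M)" for w w'
  proof -
    define x where "x = inv_into X itinerary w"
    define x' where "x' = inv_into X itinerary w'"
    have "itinerary ` X = coded_inv_lim"
      using bij_betw_itinerary unfolding bij_betw_def by blast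
    then have x: "x \<in> X" "itinerary x = w" and x': "x' \<in> X" "itinerary x' = w'"
      using that unfolding x_def x'_def by (auto intro: inv_into_into f_inv_into_f)
    have "shift_dist (w M) (w' M) < 1 / real (Suc 0)"
      using shift_dist_less_if_inv_lim_dist_less[of w w' 1 M] close by simp
    then have "code M x = code M x'"
      using x(2) x'(2) unfolding shift_dist_less_iff itinerary_def by auto
    then have "d x x' < 1 / real (Suc M)"
      using dist_less_if_code_eq x(1) x'(1) by blast
    with M show ?thesis
      unfolding x_def x'_def by linarith
  qed
  then show "\<exists>\<delta>>0. \<forall>w\<in>coded_inv_lim. \<forall>w'\<in>coded_inv_lim. inv_lim_dist (\<lambda>m. shift_dist) w w' < \<delta> \<longrightarrow>
      d (inv_into X itinerary w) (inv_into X itinerary w') < e"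
    by (intro exI[of _ "1 / real (Suc M)"]) auto
qed

lemma itinerary_f: "itinerary (f x) = inv_lim_map (\<lambda>m. shift_map) (itinerary x)"
  unfolding itinerary_def inv_lim_map_def shift_map_def by (simp add: funpow_Suc_right del: funpow.simps)

theorem uniformly_conjugate_coded_inv_lim:
  "unif_conj X d f coded_inv_lim (inv_lim_dist (\<lambda>m. shift_dist)) (inv_lim_map (\<lambda>m. shift_map))"
  unfolding unif_conj_def
  using bij_betw_itinerary ucont_itinerary ucont_inv_itinerary itinerary_f by blast

lemma itineraries_subset_recode_image: "N \<le> M \<Longrightarrow> (\<lambda>x. itinerary x N) ` X \<subseteq> recode N ` coded_shift M"
proof
  fix v assume "N \<le> M" "v \<in> (\<lambda>x. itinerary x N) ` X"
  then obtain x where "x \<in> X" "v = itinerary x N"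
    by blast
  moreover have "itinerary x N = recode N (itinerary x M)"
    using recode_itinerary[OF \<open>N \<le> M\<close> \<open>x \<in> X\<close>] by simp
  ultimately show "v \<in> recode N ` coded_shift M"
    using itinerary_in_coded_shift by blast
qed

lemma recode_image_subset_itineraries:
  assumes "N \<le> M"
    and shadow: "\<forall>xs. (\<forall>n. xs n \<in> X) \<and> (\<forall>n. d (f (xs n)) (xs (Suc n)) < 1 / real (Suc M)) \<longrightarrow>
      (\<exists>x\<in>X. \<forall>n. d ((f ^^ n) x) (xs n) < gap (level N))"
  shows "recode N ` coded_shift M \<subseteq> (\<lambda>x. itinerary x N) ` X"
proof
  fix v assume "v \<in> recode N ` coded_shift M"
  then obtain y where y: "y \<in> coded_shift M" "v = recode N y"
    by blast
  have "\<forall>t. \<exists>x\<in>X. code M x = y t \<and> code M (f x) = y (Suc t)"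
    using coded_shift_word[OF y(1)] by blast
  then obtain xs where xs_in: "\<And>t. xs t \<in> X"
    and xs: "\<And>t. code M (xs t) = y t" "\<And>t. code M (f (xs t)) = y (Suc t)"
    by metis
  have "d (f (xs n)) (xs (Suc n)) < 1 / real (Suc M)" for n
    using dist_less_if_code_eq f_in xs_in xs by metis
  then obtain z where "z \<in> X" and z: "\<And>n. d ((f ^^ n) z) (xs n) < gap (level N)"
    using shadow xs_in by blast
  have "itinerary z N t = v t" for t
  proof -
    have "code N ((f ^^ t) z) = code N (xs t)"
      using code_eq_if_dist_less[OF funpow_f_in[OF \<open>z \<in> X\<close>] xs_in z] .
    then show ?thesis
      using recode_code[OF \<open>N \<le> M\<close> xs_in[of t], of y t] xs(1)[of t] y(2)
      by (simp add: itinerary_def)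
  qed
  with \<open>z \<in> X\<close> show "v \<in> (\<lambda>x. itinerary x N) ` X"
    by (metis ext image_eqI)
qed

theorem mittag_leffler_coded_shifts:
  assumes "shadowing X d f"
  shows "mittag_leffler (\<lambda>m. one_step_shift (alphabet m) (forbidden m)) recode"
  unfolding mittag_leffler_def gcomp_recode
proof
  fix N
  obtain \<delta> where "\<delta> > 0" and \<delta>: "\<forall>xs. (\<forall>n. xs n \<in> X) \<and> (\<forall>n. d (f (xs n)) (xs (Suc n)) < \<delta>) \<longrightarrow>
      (\<exists>x\<in>X. \<forall>n. d ((f ^^ n) x) (xs n) < gap (level N))"
    using assms gap_pos unfolding shadowing_def by blast
  then obtain K where K: "1 / real (Suc K) < \<delta>"
    by (metis nat_approx_posE)
  have stable: "recode N ` coded_shift (Suc i) = (\<lambda>x. itinerary x N) ` X" if "max K N \<le> i" for i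
  proof
    have "1 / real (Suc (Suc i)) \<le> 1 / real (Suc K)"
      using that by (simp add: frac_le)
    with K have "1 / real (Suc (Suc i)) < \<delta>"
      by linarith
    then have "\<forall>xs. (\<forall>n. xs n \<in> X) \<and> (\<forall>n. d (f (xs n)) (xs (Suc n)) < 1 / real (Suc (Suc i))) \<longrightarrow>
        (\<exists>x\<in>X. \<forall>n. d ((f ^^ n) x) (xs n) < gap (level N))"
      using \<delta> by (meson order.strict_trans)
    then show "recode N ` coded_shift (Suc i) \<subseteq> (\<lambda>x. itinerary x N) ` X"
      using that by (intro recode_image_subset_itineraries) auto
    show "(\<lambda>x. itinerary x N) ` X \<subseteq> recode N ` coded_shift (Suc i)"
      using that by (intro itineraries_subset_recode_image) simp
  qed
  show "\<exists>k>N. \<forall>i\<ge>k. recode N ` coded_shift (Suc k) = recode N ` coded_shift (Suc i)"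
  proof (intro exI[of _ "Suc (max K N)"] conjI allI impI)
    fix i assume "Suc (max K N) \<le> i"
    then show "recode N ` coded_shift (Suc (Suc (max K N))) = recode N ` coded_shift (Suc i)"
      using stable[OF le_SucI[OF order_refl]] stable[OF Suc_leD] by simp
  qed simp
qed

theorem shadowing_iff_inv_lim_shift_model:
  "shadowing X d f \<longleftrightarrow>
    (\<exists>A F g. (\<forall>m. one_step_shift (A m) (F m) \<noteq> {}) \<and> mittag_leffler_shift_system A F g \<and>
       unif_conj X d f (inv_lim (\<lambda>m. one_step_shift (A m) (F m)) g)
         (inv_lim_dist (\<lambda>m. shift_dist)) (inv_lim_map (\<lambda>m. shift_map)))"
  (is "_ \<longleftrightarrow> ?model")
proof
  assume "shadowing X d f"
  then have "mittag_leffler_shift_system alphabet forbidden recode"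
    using recode_in_coded_shift recode_ucont recode_shift_map mittag_leffler_coded_shifts
    by unfold_locales blast+
  then show ?model
    using coded_shift_nonempty uniformly_conjugate_coded_inv_lim by blast
next
  assume ?model
  then obtain A F g where "mittag_leffler_shift_system A F g"
    and conj: "unif_conj X d f (inv_lim (\<lambda>m. one_step_shift (A m) (F m)) g)
      (inv_lim_dist (\<lambda>m. shift_dist)) (inv_lim_map (\<lambda>m. shift_map))"
    by blast
  then interpret mittag_leffler_shift_system A F g
    by blast
  show "shadowing X d f"
    using shadowing_if_uniformly_conjugate[OF conj f_into shadowing_inv_lim] .
qed

end

theorem corollary4p17:
  fixes X :: "'a set" and d :: "'a \<Rightarrow> 'a \<Rightarrow> real" and f :: "'a \<Rightarrow> 'a"
    and \<U> :: "nat \<Rightarrow> 'a set set"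
  assumes "dyn_sys X d f"
    and "f ` X \<subseteq> X"
    and "ucont X d d f"
    and "defining_sequence X d \<U>"
    and "complete_defseq \<U>"
    and "tame_defseq d \<U>"
  shows "shadowing X d f \<longleftrightarrow>
    (\<exists>(A :: nat \<Rightarrow> nat set) (F :: nat \<Rightarrow> (nat \<times> nat) set) (g :: nat \<Rightarrow> (nat \<Rightarrow> nat) \<Rightarrow> (nat \<Rightarrow> nat)).
       (\<forall>m. one_step_shift (A m) (F m) \<noteq> {}) \<and>
       (\<forall>m. g m ` one_step_shift (A (Suc m)) (F (Suc m)) \<subseteq> one_step_shift (A m) (F m)) \<and>
       (\<forall>m. ucont (one_step_shift (A (Suc m)) (F (Suc m))) shift_dist shift_dist (g m)) \<and>
       (\<forall>m. \<forall>y\<in>one_step_shift (A (Suc m)) (F (Suc m)). shift_map (g m y) = g m (shift_map y)) \<and>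
       mittag_leffler (\<lambda>m. one_step_shift (A m) (F m)) g \<and>
       unif_conj X d f
         (inv_lim (\<lambda>m. one_step_shift (A m) (F m)) g)
         (inv_lim_dist (\<lambda>m. shift_dist))
         (inv_lim_map (\<lambda>m. shift_map)))"
proof -
  interpret tame_coding X d f \<U>
    using assms unfolding dyn_sys_def tame_coding_def tame_coding_axioms_def by blast
  show ?thesis
    using shadowing_iff_inv_lim_shift_model
    unfolding mittag_leffler_shift_system_def mittag_leffler_shift_system_axioms_def
      shift_inverse_system_def
    by (simp add: conj_assoc)
qed

end
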